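(* For every well-typed $\lambda^{dFG}$ expression $e$, all stores $\Sigma,\Sigma'$, heaps $\mu,\mu'$, labels $pc$, environments $\theta$ and values $v$ of $\lambda^{dFG}$: if $\langle\Sigma,\mu,e\rangle\Downarrow^{\theta}_{pc}\langle\Sigma',\mu',v\rangle$, then in the forcing semantics of $\lambda^{dCG}$, $\langle\langle\!\langle\Sigma\rangle\!\rangle,\langle\!\langle\mu\rangle\!\rangle,pc,\langle\!\langle e\rangle\!\rangle\rangle\Downarrow^{\langle\!\langle\theta\rangle\!\rangle}\langle\langle\!\langle\Sigma'\rangle\!\rangle,\langle\!\langle\mu'\rangle\!\rangle,pc,\langle\!\langle v\rangle\!\rangle\rangle$.
   Context: Labels form a lattice $(\mathcal{L},\sqsubseteq,\sqcup)$. Lists: $|X|$ length, $X[n]$ entry $n$ (from 0), $X[n\mapsto y]$ replacement (append if $n=|X|$). Source calculus $\lambda^{dFG}$: types $\mathbf{unit},\tau_1\to\tau_2,\tau_1+\tau_2,\tau_1\times\tau_2,\mathcal{L},\mathbf{Ref}\,s\,\tau$ ($s\in\{I,S\}$, standard simple typing); expressions $x,\lambda x.e,e_1e_2,(),\ell,(e_1,e_2),\mathbf{fst}(e),\mathbf{snd}(e),\mathbf{inl}(e),\mathbf{inr}(e),\mathbf{case}(e,x.e_1,x.e_2),\mathbf{getLabel},\mathbf{labelOf}(e),e_1\sqsubseteq^?e_2,\mathbf{taint}(e_1,e_2),\mathbf{new}(e),!e,e_1:=e_2,\mathbf{labelOfRef}(e)$; raw values $r::=()\mid(x.e,\theta)\mid\mathbf{inl}(v)\mid\mathbf{inr}(v)\mid(v_1,v_2)\mid\ell\mid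 n_\ell\mid n$; values $v::=r^\ell$; $r^\ell\sqcup\ell'=r^{\ell\sqcup\ell'}$; stores map labels to lists of raw values; heaps are lists of values. Evaluation $\langle\Sigma,\mu,e\rangle\Downarrow^\theta_{pc}\langle\Sigma',\mu',v\rangle$ (store/heap threaded left to right through premises; "$e\Downarrow v$" uses current $\theta,pc$): $x\Downarrow\theta(x)\sqcup pc$; $()\Downarrow()^{pc}$; $\ell\Downarrow\ell^{pc}$; $\lambda x.e\Downarrow(x.e,\theta)^{pc}$; $\mathbf{getLabel}\Downarrow pc^{pc}$; $e_1e_2\Downarrow v$ if $e_1\Downarrow(x.e,\theta')^\ell$, $e_2\Downarrow v_2$ and $e$ evaluates to $v$ in $\theta'[x\mapsto v_2]$ at $pc\sqcup\ell$; $\mathbf{inl}(e)\Downarrow\mathbf{inl}(v)^{pc}$, $\mathbf{inr}(e)\Downarrow\mathbf{inr}(v)^{pc}$ if $e\Downarrow v$; $\mathbf{case}(e,x.e_1,x.e_2)\Downarrow v$ if $e\Downarrow\mathbf{inl}(v_1)^\ell$ and $e_1$ gives $v$ in $\theta[x\mapsto v_1]$ at $pc\sqcup\ell$ (symmetric for $\mathbf{inr}$, $e_2$); $(e_1,e_2)\Downarrow(v_1,v_2)^{pc}$; if $e\Downarrow(v_1,v_2)^\ell$ then $\mathbf{fst}(e)\Downarrow v_1\sqcup\ell$, $\mathbf{snd}(e)\Downarrow v_2\sqcup\ell$; if $e\Downarrow r^\ell$ then $\mathbf{labelOf}(e)\Downarrow\ell^\ell$; if $e_1\Downarrow\ell_1^{\ell_1'}$,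 $e_2\Downarrow\ell_2^{\ell_2'}$ then $e_1\sqsubseteq^?e_2\Downarrow\mathbf{inl}(()^{pc})^{\ell_1'\sqcup\ell_2'}$ if $\ell_1\sqsubseteq\ell_2$ else $\mathbf{inr}(()^{pc})^{\ell_1'\sqcup\ell_2'}$; $\mathbf{taint}(e_1,e_2)\Downarrow v$ if $e_1\Downarrow\ell^{\ell'}$, $\ell'\sqsubseteq\ell$, and $e_2$ gives $v$ at program counter $\ell$. References of type $\mathbf{Ref}\,I$: $\mathbf{new}(e)\Downarrow(n_\ell)^{pc}$ if $e\Downarrow r^\ell$ with store $\Sigma'$, $n=|\Sigma'(\ell)|$, new store $\Sigma'[\ell\mapsto\Sigma'(\ell)[n\mapsto r]]$; $!e\Downarrow r^{\ell\sqcup\ell'}$ if $e\Downarrow(n_\ell)^{\ell'}$ with store $\Sigma'$ and $\Sigma'(\ell)[n]=r$; $e_1:=e_2\Downarrow()^{pc}$ if $e_1\Downarrow(n_\ell)^{\ell_1}$, $\ell_1\sqsubseteq\ell$, $e_2\Downarrow r^{\ell_2}$ with store $\Sigma''$, $\ell_2\sqsubseteq\ell$, new store $\Sigma''[\ell\mapsto\Sigma''(\ell)[n\mapsto r]]$; $\mathbf{labelOfRef}(e)\Downarrow\ell^{\ell\sqcup\ell'}$ if $e\Downarrow(n_\ell)^{\ell'}$. References of type $\mathbf{Ref}\,S$: $\mathbf{new}(e)\Downarrow n^{pc}$ if $e\Downarrow v$ with heap $\mu'$, $n=|\mu'|$, new heap $\mu'[n\mapsto v]$; $!e\Downarrow r^{\ell\sqcup\ell'}$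 if $e\Downarrow n^\ell$, heap entry $r^{\ell'}$ at $n$; $\mathbf{labelOfRef}(e)\Downarrow\ell_2^{\ell_1\sqcup\ell_2}$ if $e\Downarrow n^{\ell_1}$, heap entry $r^{\ell_2}$; $e_1:=e_2\Downarrow()^{pc}$ if $e_1\Downarrow n^\ell$, $e_2\Downarrow r_2^{\ell_2}$ with heap $\mu''$, $\mu''[n]=r_1^{\ell_1}$, $\ell\sqsubseteq\ell_1$, new heap $\mu''[n\mapsto r_2^{\ell_2\sqcup\ell}]$. Target calculus $\lambda^{dCG}$: types add $\mathbf{LIO}\,\tau$, $\mathbf{Labeled}\,\tau$; values $()\mid(x.e,\theta)\mid\mathbf{inl}(v)\mid\mathbf{inr}(v)\mid(v_1,v_2)\mid\ell\mid\mathbf{Labeled}\,\ell\,v\mid(t,\theta)\mid n_\ell\mid n$; expressions: the pure constructs $x,\lambda x.e,e_1e_2,(),\ell$, pairs, projections, injections, $\mathbf{case}$, $e_1\sqsubseteq^?e_2$, and thunks $t::=\mathbf{return}(e)\mid\mathbf{bind}(e,x.e)\mid\mathbf{unlabel}(e)\mid\mathbf{toLabeled}(e)\mid\mathbf{labelOf}(e)\mid\mathbf{getLabel}\mid\mathbf{taint}(e)\mid\mathbf{new}(e)\mid!e\mid e_1:=e_2\mid\mathbf{labelOfRef}(e)$; stores map labels to lists of values, heaps are lists of $\mathbf{Labeled}\,\ell\,v$. Pure semantics $e\Downarrow^\theta v$: standard call-by-value environment semantics ($x\Downarrow\theta(x)$, $\lambda x.e\Downarrow(x.e,\theta)$, thunk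 $t\Downarrow(t,\theta)$, application of function closures, componentwise pairs/injections/projections, case on injections binding $x$, $e_1\sqsubseteq^?e_2$ yields $\mathbf{inl}(())$ if the labels satisfy $\ell_1\sqsubseteq\ell_2$ else $\mathbf{inr}(())$). Forcing: $\langle\Sigma,\mu,pc,e\rangle\Downarrow^\theta c'$ iff $e\Downarrow^\theta(t,\theta')$ and $\langle\Sigma,\mu,pc,t\rangle\Downarrow^{\theta'}c'$. Thunk rules (state unchanged unless said): $\mathbf{return}(e)$ gives $v$ where $e\Downarrow v$; $\mathbf{bind}(e_1,x.e_2)$ forces $e_1$ to get $\langle\Sigma',\mu',pc',v_1\rangle$ then forces $e_2$ in $\theta[x\mapsto v_1]$ from that state; $\mathbf{toLabeled}(e)$: forcing $e$ gives $\langle\Sigma',\mu',pc',v\rangle$, result $\langle\Sigma',\mu',pc,\mathbf{Labeled}\,pc'\,v\rangle$; $\mathbf{unlabel}(e)$ with $e\Downarrow\mathbf{Labeled}\,\ell\,v$ gives $v$ with program counter $pc\sqcup\ell$; $\mathbf{labelOf}(e)$ with $e\Downarrow\mathbf{Labeled}\,\ell\,v$ gives $\ell$ with program counter $pc\sqcup\ell$; $\mathbf{getLabel}$ gives $pc$; $\mathbf{taint}(e)$ with $e\Downarrow\ell$ gives $()$ with program counter $pc\sqcup\ell$; $\mathbf{Ref}\,I$: $\mathbf{new}(e)$ with $e\Downarrow\mathbf{Labeled}\,\ell\,v$, $pc\sqsubseteq\ell$, $n=|\Sigma(\ell)|$ gives $n_\ell$ and store $\Sigma[\ell\mapsto\Sigma(\ell)[n\mapsto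 v]]$; $!e$ with $e\Downarrow n_\ell$ gives $\Sigma(\ell)[n]$ with pc $pc\sqcup\ell$; $e_1:=e_2$ with $e_1\Downarrow n_{\ell_1}$, $e_2\Downarrow\mathbf{Labeled}\,\ell_2\,v$, $\ell_2\sqsubseteq\ell_1$, $pc\sqsubseteq\ell_1$ gives $()$ and store $\Sigma[\ell_1\mapsto\Sigma(\ell_1)[n\mapsto v]]$; $\mathbf{labelOfRef}(e)$ with $e\Downarrow n_\ell$ gives $\ell$ with pc $pc\sqcup\ell$; $\mathbf{Ref}\,S$: $\mathbf{new}(e)$ with $e\Downarrow\mathbf{Labeled}\,\ell\,v$, $pc\sqsubseteq\ell$, $n=|\mu|$ gives $n$ and heap $\mu[n\mapsto\mathbf{Labeled}\,\ell\,v]$; $!e$ with $e\Downarrow n$, $\mu[n]=\mathbf{Labeled}\,\ell\,v$ gives $v$ with pc $pc\sqcup\ell$; $\mathbf{labelOfRef}(e)$ likewise gives $\ell$ with pc $pc\sqcup\ell$; $e_1:=e_2$ with $e_1\Downarrow n$, $e_2\Downarrow\mathbf{Labeled}\,\ell'\,v$, $\mu[n]=\mathbf{Labeled}\,\ell\,v_0$, $pc\sqsubseteq\ell$ gives $()$ and heap $\mu[n\mapsto\mathbf{Labeled}\,(pc\sqcup\ell')\,v]$. Translation $\langle\!\langle\cdot\rangle\!\rangle$. Notation: $y\leftarrow e_1;e_2$ means $\mathbf{bind}(e_1,y.e_2)$ and $e_1;e_2$ means $\mathbf{bind}(e_1,y.e_2)$ with $y$ fresh; $\mathbf{if}\,e\,\mathbf{then}\,e_1\,\mathbf{else}\,e_2$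 means $\mathbf{case}(e,\_.e_1,\_.e_2)$. Expressions: $\langle\!\langle()\rangle\!\rangle=\mathbf{toLabeled}(\mathbf{return}(()))$; $\langle\!\langle\ell\rangle\!\rangle=\mathbf{toLabeled}(\mathbf{return}(\ell))$; $\langle\!\langle\lambda x.e\rangle\!\rangle=\mathbf{toLabeled}(\mathbf{return}(\lambda x.\langle\!\langle e\rangle\!\rangle))$; $\langle\!\langle\mathbf{inl}(e)\rangle\!\rangle=\mathbf{toLabeled}(lv\leftarrow\langle\!\langle e\rangle\!\rangle;\mathbf{return}(\mathbf{inl}(lv)))$, same for $\mathbf{inr}$; $\langle\!\langle(e_1,e_2)\rangle\!\rangle=\mathbf{toLabeled}(lv_1\leftarrow\langle\!\langle e_1\rangle\!\rangle;lv_2\leftarrow\langle\!\langle e_2\rangle\!\rangle;\mathbf{return}((lv_1,lv_2)))$; $\langle\!\langle x\rangle\!\rangle=\mathbf{toLabeled}(\mathbf{unlabel}(x))$; $\langle\!\langle e_1e_2\rangle\!\rangle=\mathbf{toLabeled}(lv_1\leftarrow\langle\!\langle e_1\rangle\!\rangle;lv_2\leftarrow\langle\!\langle e_2\rangle\!\rangle;v_1\leftarrow\mathbf{unlabel}(lv_1);lv\leftarrow v_1\,lv_2;\mathbf{unlabel}(lv))$; $\langle\!\langle\mathbf{case}(e,x.e_1,x.e_2)\rangle\!\rangle=\mathbf{toLabeled}(lv\leftarrow\langle\!\langle e\rangle\!\rangle;v\leftarrow\mathbf{unlabel}(lv);lv'\leftarrow\mathbf{case}(v,x.\langle\!\langle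 e_1\rangle\!\rangle,x.\langle\!\langle e_2\rangle\!\rangle);\mathbf{unlabel}(lv'))$; $\langle\!\langle\mathbf{fst}(e)\rangle\!\rangle=\mathbf{toLabeled}(lv\leftarrow\langle\!\langle e\rangle\!\rangle;v\leftarrow\mathbf{unlabel}(lv);\mathbf{unlabel}(\mathbf{fst}(v)))$, same for $\mathbf{snd}$; $\langle\!\langle e_1\sqsubseteq^?e_2\rangle\!\rangle=\mathbf{toLabeled}(lv_1\leftarrow\langle\!\langle e_1\rangle\!\rangle;lv_2\leftarrow\langle\!\langle e_2\rangle\!\rangle;lu\leftarrow\mathbf{toLabeled}(\mathbf{return}(()));v_1\leftarrow\mathbf{unlabel}(lv_1);v_2\leftarrow\mathbf{unlabel}(lv_2);\mathbf{return}(\mathbf{if}\,v_1\sqsubseteq^?v_2\,\mathbf{then}\,\mathbf{inl}(lu)\,\mathbf{else}\,\mathbf{inr}(lu)))$; $\langle\!\langle\mathbf{taint}(e_1,e_2)\rangle\!\rangle=\mathbf{toLabeled}(lv_1\leftarrow\langle\!\langle e_1\rangle\!\rangle;v_1\leftarrow\mathbf{unlabel}(lv_1);\mathbf{taint}(v_1);lv_2\leftarrow\langle\!\langle e_2\rangle\!\rangle;\mathbf{unlabel}(lv_2))$; $\langle\!\langle\mathbf{labelOf}(e)\rangle\!\rangle=\mathbf{toLabeled}(lv\leftarrow\langle\!\langle e\rangle\!\rangle;\mathbf{labelOf}(lv))$; $\langle\!\langle\mathbf{getLabel}\rangle\!\rangle=\mathbf{toLabeled}(\mathbf{getLabel})$;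 $\langle\!\langle\mathbf{new}(e)\rangle\!\rangle=\mathbf{toLabeled}(lv\leftarrow\langle\!\langle e\rangle\!\rangle;\mathbf{new}(lv))$; $\langle\!\langle!e\rangle\!\rangle=\mathbf{toLabeled}(lr\leftarrow\langle\!\langle e\rangle\!\rangle;r\leftarrow\mathbf{unlabel}(lr);!r)$; $\langle\!\langle e_1:=e_2\rangle\!\rangle=\mathbf{toLabeled}(lr\leftarrow\langle\!\langle e_1\rangle\!\rangle;lv\leftarrow\langle\!\langle e_2\rangle\!\rangle;r\leftarrow\mathbf{unlabel}(lr);r:=lv);\mathbf{toLabeled}(\mathbf{return}(()))$; $\langle\!\langle\mathbf{labelOfRef}(e)\rangle\!\rangle=\mathbf{toLabeled}(lr\leftarrow\langle\!\langle e\rangle\!\rangle;r\leftarrow\mathbf{unlabel}(lr);\mathbf{labelOfRef}(r))$. Here every nested translated subexpression $\langle\!\langle e_i\rangle\!\rangle$ (and the nested $\mathbf{toLabeled}(\mathbf{return}(()))$) is evaluated in an environment from which the auxiliary variables $lv,lv_1,lv_2,lv',lu,lr,r,v,v_1,v_2$ introduced by the translation have been removed (formally via a weakening construct $\mathbf{wken}(\bar x,e)$ that evaluates $e$ in $\theta$ with $\bar x$ removed from its domain), so that closures never capture them. Values: $\langle\!\langle r^\ell\rangle\!\rangle=\mathbf{Labeled}\,\ell\,\langle\!\langle r\rangle\!\rangle$; $\langle\!\langle()\rangle\!\rangle=()$, $\langle\!\langle\ell\rangle\!\rangle=\ell$, pairs and injections homomorphically; $\langle\!\langle(x.e,\theta)\rangle\!\rangle=(x.\langle\!\langle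 e\rangle\!\rangle,\langle\!\langle\theta\rangle\!\rangle)$; $\langle\!\langle n_\ell\rangle\!\rangle=n_\ell$; $\langle\!\langle n\rangle\!\rangle=n$. Environments pointwise, $\langle\!\langle\theta\rangle\!\rangle(x)=\langle\!\langle\theta(x)\rangle\!\rangle$; stores pointwise on each memory, translating each raw value $r$ to $\langle\!\langle r\rangle\!\rangle$; heaps pointwise, $\langle\!\langle r^\ell:\mu\rangle\!\rangle=\langle\!\langle r^\ell\rangle\!\rangle:\langle\!\langle\mu\rangle\!\rangle$. *)

theory Defs
  imports Main
begin

(* Labels form a lattice; we use a type variable 'l of class lattice,
   with \<le> as the flow relation and sup as join. *)

section \<open>Source calculus lambda^dFG\<close>

datatype rsort = RI | RS

datatype sty = STUnit | STFun sty sty | STSum sty sty | STProd sty sty | STLabel | STRef rsort sty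

(* Reference operations carry the sort s of their reference type, since the
   semantics of new / ! / := / labelOfRef is selected by the type Ref s tau. *)
datatype ('v, 'l) sexp =
    SVar 'v
  | SLam 'v "('v, 'l) sexp"
  | SApp "('v, 'l) sexp" "('v, 'l) sexp"
  | SUnit
  | SLbl 'l
  | SPair "('v, 'l) sexp" "('v, 'l) sexp"
  | SFst "('v, 'l) sexp"
  | SSnd "('v, 'l) sexp"
  | SInl "('v, 'l) sexp"
  | SInr "('v, 'l) sexp"
  | SCase "('v, 'l) sexp" 'v "('v, 'l) sexp" 'v "('v, 'l) sexp"
  | SGetLabel
  | SLabelOf "('v, 'l) sexp"
  | SLeq "('v, 'l) sexp" "('v, 'l) sexp"
  | STaint "('v, 'l) sexp" "('v, 'l) sexp"
  | SNew rsort "('v, 'l) sexp"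
  | SDeref rsort "('v, 'l) sexp"
  | SAssign rsort "('v, 'l) sexp" "('v, 'l) sexp"
  | SLabelOfRef rsort "('v, 'l) sexp"

inductive styping :: "('v \<Rightarrow> sty option) \<Rightarrow> ('v, 'l) sexp \<Rightarrow> sty \<Rightarrow> bool" where
  "\<Gamma> x = Some \<tau> \<Longrightarrow> styping \<Gamma> (SVar x) \<tau>"
| "styping (\<Gamma>(x \<mapsto> \<tau>1)) e \<tau>2 \<Longrightarrow> styping \<Gamma> (SLam x e) (STFun \<tau>1 \<tau>2)"
| "styping \<Gamma> e1 (STFun \<tau>1 \<tau>2) \<Longrightarrow> styping \<Gamma> e2 \<tau>1 \<Longrightarrow> styping \<Gamma> (SApp e1 e2) \<tau>2"
| "styping \<Gamma> SUnit STUnit"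
| "styping \<Gamma> (SLbl l) STLabel"
| "styping \<Gamma> e1 \<tau>1 \<Longrightarrow> styping \<Gamma> e2 \<tau>2 \<Longrightarrow> styping \<Gamma> (SPair e1 e2) (STProd \<tau>1 \<tau>2)"
| "styping \<Gamma> e (STProd \<tau>1 \<tau>2) \<Longrightarrow> styping \<Gamma> (SFst e) \<tau>1"
| "styping \<Gamma> e (STProd \<tau>1 \<tau>2) \<Longrightarrow> styping \<Gamma> (SSnd e) \<tau>2"
| "styping \<Gamma> e \<tau>1 \<Longrightarrow> styping \<Gamma> (SInl e) (STSum \<tau>1 \<tau>2)"
| "styping \<Gamma> e \<tau>2 \<Longrightarrow> styping \<Gamma> (SInr e) (STSum \<tau>1 \<tau>2)"
| "styping \<Gamma> e (STSum \<tau>1 \<tau>2) \<Longrightarrow> styping (\<Gamma>(x1 \<mapsto> \<tau>1)) e1 \<tau> \<Longrightarrow>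
   styping (\<Gamma>(x2 \<mapsto> \<tau>2)) e2 \<tau> \<Longrightarrow> styping \<Gamma> (SCase e x1 e1 x2 e2) \<tau>"
| "styping \<Gamma> SGetLabel STLabel"
| "styping \<Gamma> e \<tau> \<Longrightarrow> styping \<Gamma> (SLabelOf e) STLabel"
| "styping \<Gamma> e1 STLabel \<Longrightarrow> styping \<Gamma> e2 STLabel \<Longrightarrow> styping \<Gamma> (SLeq e1 e2) (STSum STUnit STUnit)"
| "styping \<Gamma> e1 STLabel \<Longrightarrow> styping \<Gamma> e2 \<tau> \<Longrightarrow> styping \<Gamma> (STaint e1 e2) \<tau>"
| "styping \<Gamma> e \<tau> \<Longrightarrow> styping \<Gamma> (SNew s e) (STRef s \<tau>)"
| "styping \<Gamma> e (STRef s \<tau>) \<Longrightarrow> styping \<Gamma> (SDeref s e) \<tau>"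
| "styping \<Gamma> e1 (STRef s \<tau>) \<Longrightarrow> styping \<Gamma> e2 \<tau> \<Longrightarrow> styping \<Gamma> (SAssign s e1 e2) STUnit"
| "styping \<Gamma> e (STRef s \<tau>) \<Longrightarrow> styping \<Gamma> (SLabelOfRef s e) STLabel"

datatype ('v, 'l) srval =
    RUnit
  | RClos 'v "('v, 'l) sexp" "'v \<Rightarrow> ('v, 'l) sval option"
  | RInl "('v, 'l) sval"
  | RInr "('v, 'l) sval"
  | RPair "('v, 'l) sval" "('v, 'l) sval"
  | RLbl 'l
  | RRefI nat 'l
  | RRefS nat
and ('v, 'l) sval = SV "('v, 'l) srval" 'l

type_synonym ('v, 'l) senv = "'v \<Rightarrow> ('v, 'l) sval option"
type_synonym ('v, 'l) sstore = "'l \<Rightarrow> ('v, 'l) srval list"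
type_synonym ('v, 'l) sheap = "('v, 'l) sval list"

fun sjoin :: "('v, 'l::lattice) sval \<Rightarrow> 'l \<Rightarrow> ('v, 'l) sval" where
  "sjoin (SV r l) l' = SV r (sup l l')"

(* X[n |-> y]: replacement, or append if n = |X| (only used when n \<le> |X|) *)
definition lupd :: "'a list \<Rightarrow> nat \<Rightarrow> 'a \<Rightarrow> 'a list" where
  "lupd X n y = (if n < length X then X[n := y] else X @ [y])"

(* seval theta pc Sigma mu e Sigma' mu' v  :  <Sigma,mu,e> \<Down>^theta_pc <Sigma',mu',v> *)
inductive seval :: "('v, 'l::lattice) senv \<Rightarrow> 'l \<Rightarrow> ('v, 'l) sstore \<Rightarrow> ('v, 'l) sheap \<Rightarrow> ('v, 'l) sexp
                     \<Rightarrow> ('v, 'l) sstore \<Rightarrow> ('v, 'l) sheap \<Rightarrow> ('v, 'l) sval \<Rightarrow> bool" where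
  SE_Var: "\<theta> x = Some v \<Longrightarrow> seval \<theta> pc \<Sigma> \<mu> (SVar x) \<Sigma> \<mu> (sjoin v pc)"
| SE_Unit: "seval \<theta> pc \<Sigma> \<mu> SUnit \<Sigma> \<mu> (SV RUnit pc)"
| SE_Lbl: "seval \<theta> pc \<Sigma> \<mu> (SLbl l) \<Sigma> \<mu> (SV (RLbl l) pc)"
| SE_Lam: "seval \<theta> pc \<Sigma> \<mu> (SLam x e) \<Sigma> \<mu> (SV (RClos x e \<theta>) pc)"
| SE_GetLabel: "seval \<theta> pc \<Sigma> \<mu> SGetLabel \<Sigma> \<mu> (SV (RLbl pc) pc)"
| SE_App: "seval \<theta> pc \<Sigma> \<mu> e1 \<Sigma>1 \<mu>1 (SV (RClos x e \<theta>') l) \<Longrightarrow>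
    seval \<theta> pc \<Sigma>1 \<mu>1 e2 \<Sigma>2 \<mu>2 v2 \<Longrightarrow>
    seval (\<theta>'(x \<mapsto> v2)) (sup pc l) \<Sigma>2 \<mu>2 e \<Sigma>3 \<mu>3 v \<Longrightarrow>
    seval \<theta> pc \<Sigma> \<mu> (SApp e1 e2) \<Sigma>3 \<mu>3 v"
| SE_Inl: "seval \<theta> pc \<Sigma> \<mu> e \<Sigma>' \<mu>' v \<Longrightarrow> seval \<theta> pc \<Sigma> \<mu> (SInl e) \<Sigma>' \<mu>' (SV (RInl v) pc)"
| SE_Inr: "seval \<theta> pc \<Sigma> \<mu> e \<Sigma>' \<mu>' v \<Longrightarrow> seval \<theta> pc \<Sigma> \<mu> (SInr e) \<Sigma>' \<mu>' (SV (RInr v) pc)"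
| SE_CaseL: "seval \<theta> pc \<Sigma> \<mu> e \<Sigma>1 \<mu>1 (SV (RInl v1) l) \<Longrightarrow>
    seval (\<theta>(x1 \<mapsto> v1)) (sup pc l) \<Sigma>1 \<mu>1 e1 \<Sigma>2 \<mu>2 v \<Longrightarrow>
    seval \<theta> pc \<Sigma> \<mu> (SCase e x1 e1 x2 e2) \<Sigma>2 \<mu>2 v"
| SE_CaseR: "seval \<theta> pc \<Sigma> \<mu> e \<Sigma>1 \<mu>1 (SV (RInr v2) l) \<Longrightarrow>
    seval (\<theta>(x2 \<mapsto> v2)) (sup pc l) \<Sigma>1 \<mu>1 e2 \<Sigma>2 \<mu>2 v \<Longrightarrow>
    seval \<theta> pc \<Sigma> \<mu> (SCase e x1 e1 x2 e2) \<Sigma>2 \<mu>2 v"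
| SE_Pair: "seval \<theta> pc \<Sigma> \<mu> e1 \<Sigma>1 \<mu>1 v1 \<Longrightarrow> seval \<theta> pc \<Sigma>1 \<mu>1 e2 \<Sigma>2 \<mu>2 v2 \<Longrightarrow>
    seval \<theta> pc \<Sigma> \<mu> (SPair e1 e2) \<Sigma>2 \<mu>2 (SV (RPair v1 v2) pc)"
| SE_Fst: "seval \<theta> pc \<Sigma> \<mu> e \<Sigma>' \<mu>' (SV (RPair v1 v2) l) \<Longrightarrow>
    seval \<theta> pc \<Sigma> \<mu> (SFst e) \<Sigma>' \<mu>' (sjoin v1 l)"
| SE_Snd: "seval \<theta> pc \<Sigma> \<mu> e \<Sigma>' \<mu>' (SV (RPair v1 v2) l) \<Longrightarrow>
    seval \<theta> pc \<Sigma> \<mu> (SSnd e) \<Sigma>' \<mu>' (sjoin v2 l)"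
| SE_LabelOf: "seval \<theta> pc \<Sigma> \<mu> e \<Sigma>' \<mu>' (SV r l) \<Longrightarrow>
    seval \<theta> pc \<Sigma> \<mu> (SLabelOf e) \<Sigma>' \<mu>' (SV (RLbl l) l)"
| SE_Leq: "seval \<theta> pc \<Sigma> \<mu> e1 \<Sigma>1 \<mu>1 (SV (RLbl l1) l1') \<Longrightarrow>
    seval \<theta> pc \<Sigma>1 \<mu>1 e2 \<Sigma>2 \<mu>2 (SV (RLbl l2) l2') \<Longrightarrow>
    seval \<theta> pc \<Sigma> \<mu> (SLeq e1 e2) \<Sigma>2 \<mu>2
      (SV (if l1 \<le> l2 then RInl (SV RUnit pc) else RInr (SV RUnit pc)) (sup l1' l2'))"
| SE_Taint: "seval \<theta> pc \<Sigma> \<mu> e1 \<Sigma>1 \<mu>1 (SV (RLbl l) l') \<Longrightarrow> l' \<le> l \<Longrightarrow>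
    seval \<theta> l \<Sigma>1 \<mu>1 e2 \<Sigma>2 \<mu>2 v \<Longrightarrow>
    seval \<theta> pc \<Sigma> \<mu> (STaint e1 e2) \<Sigma>2 \<mu>2 v"
| SE_NewI: "seval \<theta> pc \<Sigma> \<mu> e \<Sigma>' \<mu>' (SV r l) \<Longrightarrow> n = length (\<Sigma>' l) \<Longrightarrow>
    seval \<theta> pc \<Sigma> \<mu> (SNew RI e) (\<Sigma>'(l := lupd (\<Sigma>' l) n r)) \<mu>' (SV (RRefI n l) pc)"
| SE_DerefI: "seval \<theta> pc \<Sigma> \<mu> e \<Sigma>' \<mu>' (SV (RRefI n l) l') \<Longrightarrow> n < length (\<Sigma>' l) \<Longrightarrow>
    \<Sigma>' l ! n = r \<Longrightarrow>
    seval \<theta> pc \<Sigma> \<mu> (SDeref RI e) \<Sigma>' \<mu>' (SV r (sup l l'))"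
| SE_AssignI: "seval \<theta> pc \<Sigma> \<mu> e1 \<Sigma>' \<mu>' (SV (RRefI n l) l1) \<Longrightarrow> l1 \<le> l \<Longrightarrow>
    seval \<theta> pc \<Sigma>' \<mu>' e2 \<Sigma>'' \<mu>'' (SV r l2) \<Longrightarrow> l2 \<le> l \<Longrightarrow> n \<le> length (\<Sigma>'' l) \<Longrightarrow>
    seval \<theta> pc \<Sigma> \<mu> (SAssign RI e1 e2) (\<Sigma>''(l := lupd (\<Sigma>'' l) n r)) \<mu>'' (SV RUnit pc)"
| SE_LabelOfRefI: "seval \<theta> pc \<Sigma> \<mu> e \<Sigma>' \<mu>' (SV (RRefI n l) l') \<Longrightarrow>
    seval \<theta> pc \<Sigma> \<mu> (SLabelOfRef RI e) \<Sigma>' \<mu>' (SV (RLbl l) (sup l l'))"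
| SE_NewS: "seval \<theta> pc \<Sigma> \<mu> e \<Sigma>' \<mu>' v \<Longrightarrow> n = length \<mu>' \<Longrightarrow>
    seval \<theta> pc \<Sigma> \<mu> (SNew RS e) \<Sigma>' (lupd \<mu>' n v) (SV (RRefS n) pc)"
| SE_DerefS: "seval \<theta> pc \<Sigma> \<mu> e \<Sigma>' \<mu>' (SV (RRefS n) l) \<Longrightarrow> n < length \<mu>' \<Longrightarrow>
    \<mu>' ! n = SV r l' \<Longrightarrow>
    seval \<theta> pc \<Sigma> \<mu> (SDeref RS e) \<Sigma>' \<mu>' (SV r (sup l l'))"
| SE_LabelOfRefS: "seval \<theta> pc \<Sigma> \<mu> e \<Sigma>' \<mu>' (SV (RRefS n) l1) \<Longrightarrow> n < length \<mu>' \<Longrightarrow>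
    \<mu>' ! n = SV r l2 \<Longrightarrow>
    seval \<theta> pc \<Sigma> \<mu> (SLabelOfRef RS e) \<Sigma>' \<mu>' (SV (RLbl l2) (sup l1 l2))"
| SE_AssignS: "seval \<theta> pc \<Sigma> \<mu> e1 \<Sigma>' \<mu>' (SV (RRefS n) l) \<Longrightarrow>
    seval \<theta> pc \<Sigma>' \<mu>' e2 \<Sigma>'' \<mu>'' (SV r2 l2) \<Longrightarrow> n < length \<mu>'' \<Longrightarrow>
    \<mu>'' ! n = SV r1 l1 \<Longrightarrow> l \<le> l1 \<Longrightarrow>
    seval \<theta> pc \<Sigma> \<mu> (SAssign RS e1 e2) \<Sigma>'' (\<mu>''[n := SV r2 (sup l2 l)]) (SV RUnit pc)"

section \<open>Target calculus lambda^dCG\<close>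

(* auxiliary variable names introduced by the translation; Y is the fresh
   variable of "e1; e2" and of the wildcard binders of if-then-else *)
datatype aux = LV | LV1 | LV2 | LV' | LU | LR | R | VV | V1 | V2 | Y

datatype 'v tvar = Src 'v | Aux aux

datatype ('v, 'l) texp =
    TVar "'v tvar"
  | TLam "'v tvar" "('v, 'l) texp"
  | TApp "('v, 'l) texp" "('v, 'l) texp"
  | TUnit
  | TLbl 'l
  | TPair "('v, 'l) texp" "('v, 'l) texp"
  | TFst "('v, 'l) texp"
  | TSnd "('v, 'l) texp"
  | TInl "('v, 'l) texp"
  | TInr "('v, 'l) texp"
  | TCase "('v, 'l) texp" "'v tvar" "('v, 'l) texp" "'v tvar" "('v, 'l) texp"
  | TLeq "('v, 'l) texp" "('v, 'l) texp"
  | TThunk "('v, 'l) thunk"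
  | TWken "('v, 'l) texp"   (* evaluates its argument with all auxiliary variables removed *)
and ('v, 'l) thunk =
    Return "('v, 'l) texp"
  | Bind "('v, 'l) texp" "'v tvar" "('v, 'l) texp"
  | Unlabel "('v, 'l) texp"
  | ToLabeled "('v, 'l) texp"
  | TLabelOf "('v, 'l) texp"
  | TGetLabel
  | TTaint "('v, 'l) texp"
  | TNew rsort "('v, 'l) texp"
  | TDeref rsort "('v, 'l) texp"
  | TAssign rsort "('v, 'l) texp" "('v, 'l) texp"
  | TLabelOfRef rsort "('v, 'l) texp"

datatype ('v, 'l) tval =
    VUnit
  | VClos "'v tvar" "('v, 'l) texp" "'v tvar \<Rightarrow> ('v, 'l) tval option"
  | VInl "('v, 'l) tval"
  | VInr "('v, 'l) tval"
  | VPair "('v, 'l) tval" "('v, 'l) tval"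
  | VLbl 'l
  | VLabeled 'l "('v, 'l) tval"
  | VThunk "('v, 'l) thunk" "'v tvar \<Rightarrow> ('v, 'l) tval option"
  | VRefI nat 'l
  | VRefS nat

type_synonym ('v, 'l) tenv = "'v tvar \<Rightarrow> ('v, 'l) tval option"
type_synonym ('v, 'l) tstore = "'l \<Rightarrow> ('v, 'l) tval list"
(* heap entries Labeled l v, represented as pairs (l, v) *)
type_synonym ('v, 'l) theap = "('l \<times> ('v, 'l) tval) list"

definition drop_aux :: "('v, 'l) tenv \<Rightarrow> ('v, 'l) tenv" where
  "drop_aux \<theta> = (\<lambda>x. case x of Src y \<Rightarrow> \<theta> (Src y) | Aux _ \<Rightarrow> None)"

inductive peval :: "('v, 'l::lattice) tenv \<Rightarrow> ('v, 'l) texp \<Rightarrow> ('v, 'l) tval \<Rightarrow> bool" where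
  "\<theta> x = Some v \<Longrightarrow> peval \<theta> (TVar x) v"
| "peval \<theta> (TLam x e) (VClos x e \<theta>)"
| "peval \<theta> e1 (VClos x e \<theta>') \<Longrightarrow> peval \<theta> e2 v2 \<Longrightarrow> peval (\<theta>'(x \<mapsto> v2)) e v \<Longrightarrow>
   peval \<theta> (TApp e1 e2) v"
| "peval \<theta> TUnit VUnit"
| "peval \<theta> (TLbl l) (VLbl l)"
| "peval \<theta> e1 v1 \<Longrightarrow> peval \<theta> e2 v2 \<Longrightarrow> peval \<theta> (TPair e1 e2) (VPair v1 v2)"
| "peval \<theta> e (VPair v1 v2) \<Longrightarrow> peval \<theta> (TFst e) v1"
| "peval \<theta> e (VPair v1 v2) \<Longrightarrow> peval \<theta> (TSnd e) v2"
| "peval \<theta> e v \<Longrightarrow> peval \<theta> (TInl e) (VInl v)"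
| "peval \<theta> e v \<Longrightarrow> peval \<theta> (TInr e) (VInr v)"
| "peval \<theta> e (VInl v1) \<Longrightarrow> peval (\<theta>(x1 \<mapsto> v1)) e1 v \<Longrightarrow> peval \<theta> (TCase e x1 e1 x2 e2) v"
| "peval \<theta> e (VInr v2) \<Longrightarrow> peval (\<theta>(x2 \<mapsto> v2)) e2 v \<Longrightarrow> peval \<theta> (TCase e x1 e1 x2 e2) v"
| "peval \<theta> e1 (VLbl l1) \<Longrightarrow> peval \<theta> e2 (VLbl l2) \<Longrightarrow>
   peval \<theta> (TLeq e1 e2) (if l1 \<le> l2 then VInl VUnit else VInr VUnit)"
| "peval \<theta> (TThunk t) (VThunk t \<theta>)"
| "peval (drop_aux \<theta>) e v \<Longrightarrow> peval \<theta> (TWken e) v"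

(* force theta Sigma mu pc e Sigma' mu' pc' v :  <Sigma,mu,pc,e> \<Down>^theta <Sigma',mu',pc',v> *)
inductive force :: "('v, 'l::lattice) tenv \<Rightarrow> ('v, 'l) tstore \<Rightarrow> ('v, 'l) theap \<Rightarrow> 'l \<Rightarrow> ('v, 'l) texp
          \<Rightarrow> ('v, 'l) tstore \<Rightarrow> ('v, 'l) theap \<Rightarrow> 'l \<Rightarrow> ('v, 'l) tval \<Rightarrow> bool"
  and teval :: "('v, 'l::lattice) tenv \<Rightarrow> ('v, 'l) tstore \<Rightarrow> ('v, 'l) theap \<Rightarrow> 'l \<Rightarrow> ('v, 'l) thunk
          \<Rightarrow> ('v, 'l) tstore \<Rightarrow> ('v, 'l) theap \<Rightarrow> 'l \<Rightarrow> ('v, 'l) tval \<Rightarrow> bool" where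
  Force: "peval \<theta> e (VThunk t \<theta>') \<Longrightarrow> teval \<theta>' \<Sigma> \<mu> pc t \<Sigma>' \<mu>' pc' v \<Longrightarrow>
    force \<theta> \<Sigma> \<mu> pc e \<Sigma>' \<mu>' pc' v"
| TE_Return: "peval \<theta> e v \<Longrightarrow> teval \<theta> \<Sigma> \<mu> pc (Return e) \<Sigma> \<mu> pc v"
| TE_Bind: "force \<theta> \<Sigma> \<mu> pc e1 \<Sigma>1 \<mu>1 pc1 v1 \<Longrightarrow> force (\<theta>(x \<mapsto> v1)) \<Sigma>1 \<mu>1 pc1 e2 \<Sigma>2 \<mu>2 pc2 v \<Longrightarrow>
    teval \<theta> \<Sigma> \<mu> pc (Bind e1 x e2) \<Sigma>2 \<mu>2 pc2 v"
| TE_ToLabeled: "force \<theta> \<Sigma> \<mu> pc e \<Sigma>' \<mu>' pc' v \<Longrightarrow>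
    teval \<theta> \<Sigma> \<mu> pc (ToLabeled e) \<Sigma>' \<mu>' pc (VLabeled pc' v)"
| TE_Unlabel: "peval \<theta> e (VLabeled l v) \<Longrightarrow> teval \<theta> \<Sigma> \<mu> pc (Unlabel e) \<Sigma> \<mu> (sup pc l) v"
| TE_LabelOf: "peval \<theta> e (VLabeled l v) \<Longrightarrow> teval \<theta> \<Sigma> \<mu> pc (TLabelOf e) \<Sigma> \<mu> (sup pc l) (VLbl l)"
| TE_GetLabel: "teval \<theta> \<Sigma> \<mu> pc TGetLabel \<Sigma> \<mu> pc (VLbl pc)"
| TE_Taint: "peval \<theta> e (VLbl l) \<Longrightarrow> teval \<theta> \<Sigma> \<mu> pc (TTaint e) \<Sigma> \<mu> (sup pc l) VUnit"
| TE_NewI: "peval \<theta> e (VLabeled l v) \<Longrightarrow> pc \<le> l \<Longrightarrow> n = length (\<Sigma> l) \<Longrightarrow>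
    teval \<theta> \<Sigma> \<mu> pc (TNew RI e) (\<Sigma>(l := lupd (\<Sigma> l) n v)) \<mu> pc (VRefI n l)"
| TE_DerefI: "peval \<theta> e (VRefI n l) \<Longrightarrow> n < length (\<Sigma> l) \<Longrightarrow>
    teval \<theta> \<Sigma> \<mu> pc (TDeref RI e) \<Sigma> \<mu> (sup pc l) (\<Sigma> l ! n)"
| TE_AssignI: "peval \<theta> e1 (VRefI n l1) \<Longrightarrow> peval \<theta> e2 (VLabeled l2 v) \<Longrightarrow> l2 \<le> l1 \<Longrightarrow>
    pc \<le> l1 \<Longrightarrow> n \<le> length (\<Sigma> l1) \<Longrightarrow>
    teval \<theta> \<Sigma> \<mu> pc (TAssign RI e1 e2) (\<Sigma>(l1 := lupd (\<Sigma> l1) n v)) \<mu> pc VUnit"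
| TE_LabelOfRefI: "peval \<theta> e (VRefI n l) \<Longrightarrow>
    teval \<theta> \<Sigma> \<mu> pc (TLabelOfRef RI e) \<Sigma> \<mu> (sup pc l) (VLbl l)"
| TE_NewS: "peval \<theta> e (VLabeled l v) \<Longrightarrow> pc \<le> l \<Longrightarrow> n = length \<mu> \<Longrightarrow>
    teval \<theta> \<Sigma> \<mu> pc (TNew RS e) \<Sigma> (lupd \<mu> n (l, v)) pc (VRefS n)"
| TE_DerefS: "peval \<theta> e (VRefS n) \<Longrightarrow> n < length \<mu> \<Longrightarrow> \<mu> ! n = (l, v) \<Longrightarrow>
    teval \<theta> \<Sigma> \<mu> pc (TDeref RS e) \<Sigma> \<mu> (sup pc l) v"
| TE_LabelOfRefS: "peval \<theta> e (VRefS n) \<Longrightarrow> n < length \<mu> \<Longrightarrow> \<mu> ! n = (l, v) \<Longrightarrow>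
    teval \<theta> \<Sigma> \<mu> pc (TLabelOfRef RS e) \<Sigma> \<mu> (sup pc l) (VLbl l)"
| TE_AssignS: "peval \<theta> e1 (VRefS n) \<Longrightarrow> peval \<theta> e2 (VLabeled l' v) \<Longrightarrow> n < length \<mu> \<Longrightarrow>
    \<mu> ! n = (l, v0) \<Longrightarrow> pc \<le> l \<Longrightarrow>
    teval \<theta> \<Sigma> \<mu> pc (TAssign RS e1 e2) \<Sigma> (\<mu>[n := (sup pc l', v)]) pc VUnit"

section \<open>Translation\<close>

abbreviation (input) bnd :: "('v, 'l) texp \<Rightarrow> aux \<Rightarrow> ('v, 'l) texp \<Rightarrow> ('v, 'l) texp" where
  "bnd e1 x e2 \<equiv> TThunk (Bind e1 (Aux x) e2)"
abbreviation (input) sq :: "('v, 'l) texp \<Rightarrow> ('v, 'l) texp \<Rightarrow> ('v, 'l) texp" where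
  "sq e1 e2 \<equiv> TThunk (Bind e1 (Aux Y) e2)"
abbreviation (input) tolab :: "('v, 'l) texp \<Rightarrow> ('v, 'l) texp" where
  "tolab e \<equiv> TThunk (ToLabeled e)"
abbreviation (input) ret :: "('v, 'l) texp \<Rightarrow> ('v, 'l) texp" where
  "ret e \<equiv> TThunk (Return e)"
abbreviation (input) unl :: "('v, 'l) texp \<Rightarrow> ('v, 'l) texp" where
  "unl e \<equiv> TThunk (Unlabel e)"
abbreviation (input) av :: "aux \<Rightarrow> ('v, 'l) texp" where
  "av x \<equiv> TVar (Aux x)"

fun tr :: "('v, 'l) sexp \<Rightarrow> ('v, 'l) texp" where
  "tr SUnit = tolab (ret TUnit)"
| "tr (SLbl l) = tolab (ret (TLbl l))"
| "tr (SLam x e) = tolab (ret (TLam (Src x) (tr e)))"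
| "tr (SInl e) = tolab (bnd (TWken (tr e)) LV (ret (TInl (av LV))))"
| "tr (SInr e) = tolab (bnd (TWken (tr e)) LV (ret (TInr (av LV))))"
| "tr (SPair e1 e2) = tolab (bnd (TWken (tr e1)) LV1 (bnd (TWken (tr e2)) LV2
      (ret (TPair (av LV1) (av LV2)))))"
| "tr (SVar x) = tolab (unl (TVar (Src x)))"
| "tr (SApp e1 e2) = tolab (bnd (TWken (tr e1)) LV1 (bnd (TWken (tr e2)) LV2
      (bnd (unl (av LV1)) V1 (bnd (TApp (av V1) (av LV2)) LV (unl (av LV))))))"
| "tr (SCase e x1 e1 x2 e2) = tolab (bnd (TWken (tr e)) LV (bnd (unl (av LV)) VV
      (bnd (TCase (av VV) (Src x1) (TWken (tr e1)) (Src x2) (TWken (tr e2))) LV' (unl (av LV')))))"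
| "tr (SFst e) = tolab (bnd (TWken (tr e)) LV (bnd (unl (av LV)) VV (unl (TFst (av VV)))))"
| "tr (SSnd e) = tolab (bnd (TWken (tr e)) LV (bnd (unl (av LV)) VV (unl (TSnd (av VV)))))"
| "tr (SLeq e1 e2) = tolab (bnd (TWken (tr e1)) LV1 (bnd (TWken (tr e2)) LV2
      (bnd (TWken (tolab (ret TUnit))) LU (bnd (unl (av LV1)) V1 (bnd (unl (av LV2)) V2
      (ret (TCase (TLeq (av V1) (av V2)) (Aux Y) (TInl (av LU)) (Aux Y) (TInr (av LU)))))))))"
| "tr (STaint e1 e2) = tolab (bnd (TWken (tr e1)) LV1 (bnd (unl (av LV1)) V1
      (sq (TThunk (TTaint (av V1))) (bnd (TWken (tr e2)) LV2 (unl (av LV2))))))"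
| "tr (SLabelOf e) = tolab (bnd (TWken (tr e)) LV (TThunk (TLabelOf (av LV))))"
| "tr SGetLabel = tolab (TThunk TGetLabel)"
| "tr (SNew s e) = tolab (bnd (TWken (tr e)) LV (TThunk (TNew s (av LV))))"
| "tr (SDeref s e) = tolab (bnd (TWken (tr e)) LR (bnd (unl (av LR)) R (TThunk (TDeref s (av R)))))"
| "tr (SAssign s e1 e2) = sq (tolab (bnd (TWken (tr e1)) LR (bnd (TWken (tr e2)) LV
      (bnd (unl (av LR)) R (TThunk (TAssign s (av R) (av LV))))))) (TWken (tolab (ret TUnit)))"
| "tr (SLabelOfRef s e) = tolab (bnd (TWken (tr e)) LR (bnd (unl (av LR)) R
      (TThunk (TLabelOfRef s (av R)))))"

primrec tr_rval :: "('v, 'l) srval \<Rightarrow> ('v, 'l) tval"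
  and tr_val :: "('v, 'l) sval \<Rightarrow> ('v, 'l) tval" where
  "tr_rval RUnit = VUnit"
| "tr_rval (RClos x e \<theta>) = VClos (Src x) (tr e)
     (\<lambda>y. case y of Src z \<Rightarrow> map_option tr_val (\<theta> z) | Aux _ \<Rightarrow> None)"
| "tr_rval (RInl v) = VInl (tr_val v)"
| "tr_rval (RInr v) = VInr (tr_val v)"
| "tr_rval (RPair v1 v2) = VPair (tr_val v1) (tr_val v2)"
| "tr_rval (RLbl l) = VLbl l"
| "tr_rval (RRefI n l) = VRefI n l"
| "tr_rval (RRefS n) = VRefS n"
| "tr_val (SV r l) = VLabeled l (tr_rval r)"

definition tr_env :: "('v, 'l) senv \<Rightarrow> ('v, 'l) tenv" where
  "tr_env \<theta> = (\<lambda>y. case y of Src z \<Rightarrow> map_option tr_val (\<theta> z) | Aux _ \<Rightarrow> None)"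

definition tr_store :: "('v, 'l) sstore \<Rightarrow> ('v, 'l) tstore" where
  "tr_store \<Sigma> = (\<lambda>l. map tr_rval (\<Sigma> l))"

fun tr_hentry :: "('v, 'l) sval \<Rightarrow> 'l \<times> ('v, 'l) tval" where
  "tr_hentry (SV r l) = (l, tr_rval r)"

definition tr_heap :: "('v, 'l) sheap \<Rightarrow> ('v, 'l) theap" where
  "tr_heap \<mu> = map tr_hentry \<mu>"

end

theory Submission
  imports Defs
begin

(* A translated expression has the
   shape toLabeled(body), so its result is Labeled pc' w, where pc' is the program
   counter at the end of the body.  The body ends by unlabelling the result of its
   last sub-computation, which is labelled l, so pc' = pc'' \<squnion> l.  Every source
   evaluation returns a value labelled at least by its program counter, hence
   pc'' \<sqsubseteq> l, pc' = l, and Labeled l w is the translation of the source result.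
   The rest is bookkeeping: translated subterms cannot see the auxiliary variables
   of the translation, and the translations of stores and heaps commute with
   allocation, lookup and update. *)

fun sval_label :: "('v, 'l) sval \<Rightarrow> 'l" where
  "sval_label (SV r l) = l"

fun sval_raw :: "('v, 'l) sval \<Rightarrow> ('v, 'l) srval" where
  "sval_raw (SV r l) = r"

lemma sval_label_sjoin [simp]: "sval_label (sjoin v l) = sup (sval_label v) l"
  by (cases v) simp

lemma sval_raw_sjoin [simp]: "sval_raw (sjoin v l) = sval_raw v"
  by (cases v) simp

lemma seval_pc_le_label: "seval \<theta> pc \<Sigma> \<mu> e \<Sigma>' \<mu>' v \<Longrightarrow> pc \<le> sval_label v"
  by (induction rule: seval.induct) (auto intro: le_supI1 le_supI2 order_trans)

lemma tr_val_eq_VLabeled [simp]: "tr_val v = VLabeled (sval_label v) (tr_rval (sval_raw v))"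
  by (cases v) simp

lemma tr_hentry_eq [simp]: "tr_hentry v = (sval_label v, tr_rval (sval_raw v))"
  by (cases v) simp

lemma tr_rval_RClos [simp]: "tr_rval (RClos x e \<theta>) = VClos (Src x) (tr e) (tr_env \<theta>)"
  by (simp add: tr_env_def)

declare tr_rval.simps(2) [simp del]

lemma tr_env_Src [simp]: "tr_env \<theta> (Src x) = map_option tr_val (\<theta> x)"
  by (simp add: tr_env_def)

lemma tr_env_upd [simp]: "tr_env (\<theta>(x \<mapsto> v)) = (tr_env \<theta>)(Src x \<mapsto> tr_val v)"
  by (rule ext) (simp add: tr_env_def split: tvar.split)

lemma drop_aux_upd_Aux [simp]: "drop_aux (\<theta>(Aux a \<mapsto> v)) = drop_aux \<theta>"
  by (rule ext) (simp add: drop_aux_def split: tvar.split)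

lemma drop_aux_upd_Src [simp]: "drop_aux (\<theta>(Src x \<mapsto> v)) = (drop_aux \<theta>)(Src x \<mapsto> v)"
  by (rule ext) (simp add: drop_aux_def split: tvar.split)

lemma drop_aux_tr_env [simp]: "drop_aux (tr_env \<theta>) = tr_env \<theta>"
  by (rule ext) (simp add: drop_aux_def tr_env_def split: tvar.split)

lemma map_lupd: "map f (lupd X n y) = lupd (map f X) n (f y)"
  by (simp add: lupd_def map_update)

lemma length_tr_store: "length (tr_store \<Sigma> l) = length (\<Sigma> l)"
  by (simp add: tr_store_def)

lemma nth_tr_store: "n < length (\<Sigma> l) \<Longrightarrow> tr_store \<Sigma> l ! n = tr_rval (\<Sigma> l ! n)"
  by (simp add: tr_store_def)

lemma tr_store_lupd:
  "tr_store (\<Sigma>(l := lupd (\<Sigma> l) n r)) = (tr_store \<Sigma>)(l := lupd (tr_store \<Sigma> l) n (tr_rval r))"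
  by (rule ext) (simp add: tr_store_def map_lupd)

lemma length_tr_heap: "length (tr_heap \<mu>) = length \<mu>"
  by (simp add: tr_heap_def)

lemma nth_tr_heap: "n < length \<mu> \<Longrightarrow> tr_heap \<mu> ! n = tr_hentry (\<mu> ! n)"
  by (simp add: tr_heap_def)

lemma tr_heap_lupd: "tr_heap (lupd \<mu> n v) = lupd (tr_heap \<mu>) n (tr_hentry v)"
  by (simp add: tr_heap_def map_lupd)

lemma tr_heap_update: "tr_heap (\<mu>[n := v]) = (tr_heap \<mu>)[n := tr_hentry v]"
  by (simp add: tr_heap_def map_update)

lemmas tr_state_simps =
  length_tr_store nth_tr_store tr_store_lupd length_tr_heap nth_tr_heap tr_heap_lupd tr_heap_update

(* Results that are not determined by the conclusion pattern (program counters,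
   updated states, the branch taken by a case) are turned into premises, so that
   these rules apply by resolution while the intermediate states and values of a
   translated computation are still unknown. *)

lemma peval_TLeq:
  "peval \<theta> e1 (VLbl l1) \<Longrightarrow> peval \<theta> e2 (VLbl l2) \<Longrightarrow>
   w = (if l1 \<le> l2 then VInl VUnit else VInr VUnit) \<Longrightarrow> peval \<theta> (TLeq e1 e2) w"
  by (simp add: peval.intros)

lemma peval_TCase:
  "peval \<theta> e w \<Longrightarrow>
   (case w of VInl v1 \<Rightarrow> peval (\<theta>(x1 \<mapsto> v1)) e1 v
            | VInr v2 \<Rightarrow> peval (\<theta>(x2 \<mapsto> v2)) e2 v
            | _ \<Rightarrow> False) \<Longrightarrow>
   peval \<theta> (TCase e x1 e1 x2 e2) v"
  by (auto split: tval.splits intro: peval.intros)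

lemma force_thunk: "teval \<theta> \<Sigma> \<mu> pc t \<Sigma>' \<mu>' pc' v \<Longrightarrow> force \<theta> \<Sigma> \<mu> pc (TThunk t) \<Sigma>' \<mu>' pc' v"
  by (rule Force) (rule peval.intros)

lemma force_wken:
  "force (drop_aux \<theta>) \<Sigma> \<mu> pc e \<Sigma>' \<mu>' pc' v \<Longrightarrow> force \<theta> \<Sigma> \<mu> pc (TWken e) \<Sigma>' \<mu>' pc' v"
  by (erule force.cases) (auto intro: Force peval.intros)

lemma force_app:
  "peval \<theta> e1 (VClos x e \<theta>') \<Longrightarrow> peval \<theta> e2 v2 \<Longrightarrow>
   force (\<theta>'(x \<mapsto> v2)) \<Sigma> \<mu> pc e \<Sigma>' \<mu>' pc' v \<Longrightarrow> force \<theta> \<Sigma> \<mu> pc (TApp e1 e2) \<Sigma>' \<mu>' pc' v"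
  by (erule force.cases) (auto intro: Force peval.intros)

lemma force_case:
  "peval \<theta> e w \<Longrightarrow>
   (case w of VInl v1 \<Rightarrow> force (\<theta>(x1 \<mapsto> v1)) \<Sigma> \<mu> pc e1 \<Sigma>' \<mu>' pc' v
            | VInr v2 \<Rightarrow> force (\<theta>(x2 \<mapsto> v2)) \<Sigma> \<mu> pc e2 \<Sigma>' \<mu>' pc' v
            | _ \<Rightarrow> False) \<Longrightarrow>
   force \<theta> \<Sigma> \<mu> pc (TCase e x1 e1 x2 e2) \<Sigma>' \<mu>' pc' v"
  by (auto split: tval.splits elim!: force.cases intro: Force peval.intros)

lemma force_return: "peval \<theta> e v \<Longrightarrow> force \<theta> \<Sigma> \<mu> pc (TThunk (Return e)) \<Sigma> \<mu> pc v"
  by (intro force_thunk TE_Return)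

lemma force_bind:
  "force \<theta> \<Sigma> \<mu> pc e1 \<Sigma>1 \<mu>1 pc1 v1 \<Longrightarrow> force (\<theta>(x \<mapsto> v1)) \<Sigma>1 \<mu>1 pc1 e2 \<Sigma>2 \<mu>2 pc2 v \<Longrightarrow>
   force \<theta> \<Sigma> \<mu> pc (TThunk (Bind e1 x e2)) \<Sigma>2 \<mu>2 pc2 v"
  by (intro force_thunk TE_Bind)

lemma force_toLabeled:
  "force \<theta> \<Sigma> \<mu> pc e \<Sigma>' \<mu>' pc' v \<Longrightarrow>
   force \<theta> \<Sigma> \<mu> pc (TThunk (ToLabeled e)) \<Sigma>' \<mu>' pc (VLabeled pc' v)"
  by (intro force_thunk TE_ToLabeled)

lemma force_unlabel:
  "peval \<theta> e (VLabeled l v) \<Longrightarrow> pc' = sup pc l \<Longrightarrow>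
   force \<theta> \<Sigma> \<mu> pc (TThunk (Unlabel e)) \<Sigma> \<mu> pc' v"
  by (simp add: force_thunk TE_Unlabel)

lemma force_labelOf:
  "peval \<theta> e (VLabeled l v) \<Longrightarrow> pc' = sup pc l \<Longrightarrow>
   force \<theta> \<Sigma> \<mu> pc (TThunk (TLabelOf e)) \<Sigma> \<mu> pc' (VLbl l)"
  by (simp add: force_thunk TE_LabelOf)

lemma force_getLabel: "force \<theta> \<Sigma> \<mu> pc (TThunk TGetLabel) \<Sigma> \<mu> pc (VLbl pc)"
  by (intro force_thunk TE_GetLabel)

lemma force_taint:
  "peval \<theta> e (VLbl l) \<Longrightarrow> pc' = sup pc l \<Longrightarrow> force \<theta> \<Sigma> \<mu> pc (TThunk (TTaint e)) \<Sigma> \<mu> pc' VUnit"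
  by (simp add: force_thunk TE_Taint)

lemma force_newI:
  "peval \<theta> e (VLabeled l v) \<Longrightarrow> pc \<le> l \<Longrightarrow> n = length (\<Sigma> l) \<Longrightarrow>
   \<Sigma>' = \<Sigma>(l := lupd (\<Sigma> l) n v) \<Longrightarrow> force \<theta> \<Sigma> \<mu> pc (TThunk (TNew RI e)) \<Sigma>' \<mu> pc (VRefI n l)"
  by (simp add: force_thunk TE_NewI)

lemma force_derefI:
  "peval \<theta> e (VRefI n l) \<Longrightarrow> n < length (\<Sigma> l) \<Longrightarrow> pc' = sup pc l \<Longrightarrow> v = \<Sigma> l ! n \<Longrightarrow>
   force \<theta> \<Sigma> \<mu> pc (TThunk (TDeref RI e)) \<Sigma> \<mu> pc' v"
  by (simp add: force_thunk TE_DerefI)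

lemma force_assignI:
  "peval \<theta> e1 (VRefI n l1) \<Longrightarrow> peval \<theta> e2 (VLabeled l2 v) \<Longrightarrow> l2 \<le> l1 \<Longrightarrow> pc \<le> l1 \<Longrightarrow>
   n \<le> length (\<Sigma> l1) \<Longrightarrow> \<Sigma>' = \<Sigma>(l1 := lupd (\<Sigma> l1) n v) \<Longrightarrow>
   force \<theta> \<Sigma> \<mu> pc (TThunk (TAssign RI e1 e2)) \<Sigma>' \<mu> pc VUnit"
  by (simp add: force_thunk TE_AssignI)

lemma force_labelOfRefI:
  "peval \<theta> e (VRefI n l) \<Longrightarrow> pc' = sup pc l \<Longrightarrow>
   force \<theta> \<Sigma> \<mu> pc (TThunk (TLabelOfRef RI e)) \<Sigma> \<mu> pc' (VLbl l)"
  by (simp add: force_thunk TE_LabelOfRefI)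

lemma force_newS:
  "peval \<theta> e (VLabeled l v) \<Longrightarrow> pc \<le> l \<Longrightarrow> n = length \<mu> \<Longrightarrow> \<mu>' = lupd \<mu> n (l, v) \<Longrightarrow>
   force \<theta> \<Sigma> \<mu> pc (TThunk (TNew RS e)) \<Sigma> \<mu>' pc (VRefS n)"
  by (simp add: force_thunk TE_NewS)

lemma force_derefS:
  "peval \<theta> e (VRefS n) \<Longrightarrow> n < length \<mu> \<Longrightarrow> \<mu> ! n = (l, v) \<Longrightarrow> pc' = sup pc l \<Longrightarrow>
   force \<theta> \<Sigma> \<mu> pc (TThunk (TDeref RS e)) \<Sigma> \<mu> pc' v"
  by (simp add: force_thunk TE_DerefS)

lemma force_labelOfRefS:
  "peval \<theta> e (VRefS n) \<Longrightarrow> n < length \<mu> \<Longrightarrow> \<mu> ! n = (l, v) \<Longrightarrow> pc' = sup pc l \<Longrightarrow>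
   force \<theta> \<Sigma> \<mu> pc (TThunk (TLabelOfRef RS e)) \<Sigma> \<mu> pc' (VLbl l)"
  by (simp add: force_thunk TE_LabelOfRefS)

lemma force_assignS:
  "peval \<theta> e1 (VRefS n) \<Longrightarrow> peval \<theta> e2 (VLabeled l' v) \<Longrightarrow> n < length \<mu> \<Longrightarrow>
   \<mu> ! n = (l, v0) \<Longrightarrow> pc \<le> l \<Longrightarrow> \<mu>' = \<mu>[n := (sup pc l', v)] \<Longrightarrow>
   force \<theta> \<Sigma> \<mu> pc (TThunk (TAssign RS e1 e2)) \<Sigma> \<mu>' pc VUnit"
  by (simp add: force_thunk TE_AssignS)

lemmas target_eval_intros =
  force_return force_bind force_toLabeled force_unlabel force_labelOf force_getLabel force_taint
  force_newI force_derefI force_assignI force_labelOfRefI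
  force_newS force_derefS force_labelOfRefS force_assignS
  force_wken force_app force_case peval_TLeq peval_TCase peval.intros

lemma seval_imp_force_tr:
  "seval \<theta> pc \<Sigma> \<mu> e \<Sigma>' \<mu>' v \<Longrightarrow>
   force (tr_env \<theta>) (tr_store \<Sigma>) (tr_heap \<mu>) pc (tr e) (tr_store \<Sigma>') (tr_heap \<mu>') pc (tr_val v)"
  (* The induction hypotheses contain eta-expanded updated environments, which
     fun_upd_apply would take apart before tr_env_upd applies; no_asm_simp keeps them
     intact for assumption.  Commutativity of sup comes last, so that a program counter
     still to be determined is instantiated in the same form as in the hypotheses. *)
  by (induction rule: seval.induct;
      ((drule seval_pc_le_label)+)?;
      simp del: fun_upd_apply add: sup.absorb1 sup.absorb2;
      (rule target_eval_intros conjI impI | assumption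
       | simp (no_asm_simp) del: fun_upd_apply
           add: fun_upd_same fun_upd_other tr_state_simps sup.absorb1 sup.absorb2
       | simp (no_asm_simp) del: fun_upd_apply add: sup.commute)+)

theorem mainTheorem5:
  fixes e :: "('v, 'l::lattice) sexp"
    and \<Gamma> :: "'v \<Rightarrow> sty option"
  assumes "styping \<Gamma> e \<tau>"
    and "seval \<theta> pc \<Sigma> \<mu> e \<Sigma>' \<mu>' v"
  shows "force (tr_env \<theta>) (tr_store \<Sigma>) (tr_heap \<mu>) pc (tr e)
           (tr_store \<Sigma>') (tr_heap \<mu>') pc (tr_val v)"
  using assms(2) by (rule seval_imp_force_tr)

end
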